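(* Let $K$ be a field, $f\colon R\to S$ a morphism of Zinbiel algebras, and $\Theta_t=\sum_{i\ge0}\theta_it^i$ a deformation of $f$ with $\theta_i=(m_{R,i};m_{S,i};f_i)$. Then the infinitesimal $\theta_1$ is a $2$-cocycle in $C^2_{\mathrm{Zinb}}(f,f)$, i.e. $d^2_f\theta_1=0$. More generally, if $\theta_i=0$ for $i=1,\dots,l$, then $\theta_{l+1}$ is a $2$-cocycle. Moreover, if $\overline{\Theta}_t$ is a deformation of $f$ equivalent to $\Theta_t$, then $\theta_1-\overline{\theta}_1$ is a $2$-coboundary; that is, the cohomology class of $\theta_1$ in $H^2_{\mathrm{Zinb}}(f,f)$ depends only on the equivalence class of $\Theta_t$.
   Context: A Zinbiel algebra over $K$ is a $K$-vector space $R$ with bilinear product $x\cdot y$ (also written $m_R(x,y)$) satisfying $(x\cdot y)\cdot z=x\cdot(y\cdot z)+x\cdot(z\cdot y)$. A morphism $f\colon R\to S$ is a linear map with $f(x\cdot y)=f(x)\cdot f(y)$. $R$ is a bimodule over itself, $S$ over itself, and $S$ is an $R$-bimodule via $r\cdot s=f(r)\cdot s$, $s\cdot r=s\cdot f(r)$. For a bimodule $A$ over $R$ and $1\le n\le4$, $C^n_{\mathrm{Zinb}}(R,A)=\mathrm{Hom}_K(R^{\otimes n},A)$ with $(d^1\varphi)(x,y)=x\cdot\varphi(y)-\varphi(x\cdot y)+\varphi(x)\cdot y$, $(d^2\varphi)(x,y,z)=x\cdot(\varphi(y,z)+\varphi(z,y))-\varphi(x\cdot y,z)+\varphi(x,y\cdot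 z+z\cdot y)-\varphi(x,y)\cdot z$, $(d^3\varphi)(x,y,z,w)=x\cdot\{\varphi(y,z,w)-\varphi(z,w,y)+\varphi(z,y,w)-\varphi(w,z,y)\}-\varphi(x\cdot y,z,w)+\varphi(x,y\cdot z+z\cdot y,w)-\varphi(x,y,z\cdot w+w\cdot z)+\varphi(x,y,z)\cdot w$. The deformation complex: $C^0_{\mathrm{Zinb}}(R,S)=0$, $d^0=0$, $C^n_{\mathrm{Zinb}}(f,f)=C^n_{\mathrm{Zinb}}(R,R)\times C^n_{\mathrm{Zinb}}(S,S)\times C^{n-1}_{\mathrm{Zinb}}(R,S)$ ($1\le n\le4$), $d^i_f(\xi;\pi;\varphi)=(d^i\xi;d^i\pi;f\xi-\pi f-d^{i-1}\varphi)$ with $(f\xi)(x_1,\dots)=f(\xi(x_1,\dots))$, $(\pi f)(x_1,\dots)=\pi(f(x_1),\dots)$. $H^2_{\mathrm{Zinb}}(f,f)$ is the second cohomology of this complex; elements of $C^1_{\mathrm{Zinb}}(f,f)$ are pairs $(\xi;\pi)$. A deformation of $f$ is a formal power series $\Theta_t=\sum_{i\ge0}\theta_it^i$ ($t$ an indeterminate) with $\theta_0=(m_R;m_S;f)$ and $\theta_i=(m_{R,i};m_{S,i};f_i)\in C^2_{\mathrm{Zinb}}(f,f)$, such that for $*=R,S$ the bilinear map $M_{*,t}=\sum_i m_{*,i}t^i$ satisfies $M_{*,t}(M_{*,t}(x,y),z)=M_{*,t}(x,M_{*,t}(y,z))+M_{*,t}(x,M_{*,t}(z,y))$ on $*[[t]]$,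 and $F_t=\sum_if_it^i$ satisfies $F_t(M_{R,t}(x,y))=M_{S,t}(F_t(x),F_t(y))$. Its infinitesimal is $\theta_1$. A formal isomorphism of $f$ is $\Phi_t=(\Phi_{R,t};\Phi_{S,t})=\sum_{i\ge0}(\phi_{R,i};\phi_{S,i})t^i$ with $(\phi_{R,0};\phi_{S,0})=(\mathrm{Id}_R;\mathrm{Id}_S)$ and $\phi_{R,i}\in\mathrm{Hom}_K(R,R)$, $\phi_{S,i}\in\mathrm{Hom}_K(S,S)$. Two deformations $\Theta_t=(M_{R,t};M_{S,t};F_t)$, $\overline{\Theta}_t=(\overline{M}_{R,t};\overline{M}_{S,t};\overline{F}_t)$ are equivalent if there is a formal isomorphism $\Phi_t$ with $\overline{M}_{R,t}=\Phi_{R,t}M_{R,t}\Phi_{R,t}^{-1}$ (i.e. $\overline{M}_{R,t}(x,y)=\Phi_{R,t}(M_{R,t}(\Phi_{R,t}^{-1}x,\Phi_{R,t}^{-1}y))$), similarly for $S$, and $\overline{F}_t=\Phi_{S,t}F_t\Phi_{R,t}^{-1}$. *)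

theory Defs
  imports Complex_Main
begin

definition k_bilinear :: "('k::field \<Rightarrow> 'a::ab_group_add \<Rightarrow> 'a) \<Rightarrow> ('k \<Rightarrow> 'b::ab_group_add \<Rightarrow> 'b)
    \<Rightarrow> ('a \<Rightarrow> 'a \<Rightarrow> 'b) \<Rightarrow> bool" where
  "k_bilinear sa sb m \<longleftrightarrow>
     (\<forall>x. Vector_Spaces.linear sa sb (m x)) \<and> (\<forall>y. Vector_Spaces.linear sa sb (\<lambda>x. m x y))"

definition zinbiel :: "('k::field \<Rightarrow> 'a::ab_group_add \<Rightarrow> 'a) \<Rightarrow> ('a \<Rightarrow> 'a \<Rightarrow> 'a) \<Rightarrow> bool" where
  "zinbiel sc m \<longleftrightarrow> vector_space sc \<and> k_bilinear sc sc m \<and>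
     (\<forall>x y z. m (m x y) z = m x (m y z) + m x (m z y))"

definition zinbiel_morphism ::
  "('k::field \<Rightarrow> 'r::ab_group_add \<Rightarrow> 'r) \<Rightarrow> ('k \<Rightarrow> 's::ab_group_add \<Rightarrow> 's)
   \<Rightarrow> ('r \<Rightarrow> 'r \<Rightarrow> 'r) \<Rightarrow> ('s \<Rightarrow> 's \<Rightarrow> 's) \<Rightarrow> ('r \<Rightarrow> 's) \<Rightarrow> bool" where
  "zinbiel_morphism scR scS mR mS f \<longleftrightarrow>
     zinbiel scR mR \<and> zinbiel scS mS \<and> Vector_Spaces.linear scR scS f \<and>
     (\<forall>x y. f (mR x y) = mS (f x) (f y))"

text \<open>Coboundary operators d^1, d^2 of C_Zinb(R,A) for an R-bimodule A with left action lam,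
  right action rho, and product mu of R.\<close>

definition zinb_d1 :: "('r \<Rightarrow> 'a \<Rightarrow> 'a) \<Rightarrow> ('a \<Rightarrow> 'r \<Rightarrow> 'a) \<Rightarrow> ('r \<Rightarrow> 'r \<Rightarrow> 'r)
    \<Rightarrow> ('r \<Rightarrow> 'a::ab_group_add) \<Rightarrow> 'r \<Rightarrow> 'r \<Rightarrow> 'a" where
  "zinb_d1 lam rho mu \<phi> x y = lam x (\<phi> y) - \<phi> (mu x y) + rho (\<phi> x) y"

definition zinb_d2 :: "('r::ab_group_add \<Rightarrow> 'a \<Rightarrow> 'a) \<Rightarrow> ('a \<Rightarrow> 'r \<Rightarrow> 'a) \<Rightarrow> ('r \<Rightarrow> 'r \<Rightarrow> 'r)
    \<Rightarrow> ('r \<Rightarrow> 'r \<Rightarrow> 'a::ab_group_add) \<Rightarrow> 'r \<Rightarrow> 'r \<Rightarrow> 'r \<Rightarrow> 'a" where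
  "zinb_d2 lam rho mu \<phi> x y z =
     lam x (\<phi> y z + \<phi> z y) - \<phi> (mu x y) z + \<phi> x (mu y z + mu z y) - rho (\<phi> x y) z"

text \<open>Deformation complex of f : R -> S. A 1-cochain is a pair (xi; pi) (C^0(R,S) = 0),
  a 2-cochain is a triple (xi; pi; phi) with phi in C^1(R,S).
  S is an R-bimodule via r.s = f(r).s and s.r = s.f(r).\<close>

definition zinb_d1f :: "('r \<Rightarrow> 'r \<Rightarrow> 'r) \<Rightarrow> ('s \<Rightarrow> 's \<Rightarrow> 's) \<Rightarrow> ('r \<Rightarrow> 's::ab_group_add)
    \<Rightarrow> ('r \<Rightarrow> 'r::ab_group_add) \<times> ('s \<Rightarrow> 's)
    \<Rightarrow> ('r \<Rightarrow> 'r \<Rightarrow> 'r) \<times> ('s \<Rightarrow> 's \<Rightarrow> 's) \<times> ('r \<Rightarrow> 's)" where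
  "zinb_d1f mR mS f c = (case c of (\<xi>, \<pi>) \<Rightarrow>
     (zinb_d1 mR mR mR \<xi>, zinb_d1 mS mS mS \<pi>, \<lambda>x. f (\<xi> x) - \<pi> (f x)))"

definition zinb_d2f :: "('r \<Rightarrow> 'r \<Rightarrow> 'r) \<Rightarrow> ('s \<Rightarrow> 's \<Rightarrow> 's) \<Rightarrow> ('r \<Rightarrow> 's::ab_group_add)
    \<Rightarrow> ('r \<Rightarrow> 'r \<Rightarrow> 'r::ab_group_add) \<times> ('s \<Rightarrow> 's \<Rightarrow> 's) \<times> ('r \<Rightarrow> 's)
    \<Rightarrow> ('r \<Rightarrow> 'r \<Rightarrow> 'r \<Rightarrow> 'r) \<times> ('s \<Rightarrow> 's \<Rightarrow> 's \<Rightarrow> 's) \<times> ('r \<Rightarrow> 'r \<Rightarrow> 's)" where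
  "zinb_d2f mR mS f c = (case c of (\<xi>, \<pi>, \<phi>) \<Rightarrow>
     (zinb_d2 mR mR mR \<xi>, zinb_d2 mS mS mS \<pi>,
      \<lambda>x y. f (\<xi> x y) - \<pi> (f x) (f y)
            - zinb_d1 (\<lambda>r s. mS (f r) s) (\<lambda>s r. mS s (f r)) mR \<phi> x y))"

definition zinb_C2f :: "('k::field \<Rightarrow> 'r::ab_group_add \<Rightarrow> 'r) \<Rightarrow> ('k \<Rightarrow> 's::ab_group_add \<Rightarrow> 's)
    \<Rightarrow> ('r \<Rightarrow> 'r \<Rightarrow> 'r) \<times> ('s \<Rightarrow> 's \<Rightarrow> 's) \<times> ('r \<Rightarrow> 's) \<Rightarrow> bool" where
  "zinb_C2f scR scS c = (case c of (\<xi>, \<pi>, \<phi>) \<Rightarrow>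
     k_bilinear scR scR \<xi> \<and> k_bilinear scS scS \<pi> \<and> Vector_Spaces.linear scR scS \<phi>)"

definition zinb_2cocycle :: "('k::field \<Rightarrow> 'r::ab_group_add \<Rightarrow> 'r) \<Rightarrow> ('k \<Rightarrow> 's::ab_group_add \<Rightarrow> 's)
    \<Rightarrow> ('r \<Rightarrow> 'r \<Rightarrow> 'r) \<Rightarrow> ('s \<Rightarrow> 's \<Rightarrow> 's) \<Rightarrow> ('r \<Rightarrow> 's)
    \<Rightarrow> ('r \<Rightarrow> 'r \<Rightarrow> 'r) \<times> ('s \<Rightarrow> 's \<Rightarrow> 's) \<times> ('r \<Rightarrow> 's) \<Rightarrow> bool" where
  "zinb_2cocycle scR scS mR mS f c \<longleftrightarrow> zinb_C2f scR scS c \<and>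
     zinb_d2f mR mS f c = ((\<lambda>_ _ _. 0), (\<lambda>_ _ _. 0), (\<lambda>_ _. 0))"

definition zinb_2coboundary :: "('k::field \<Rightarrow> 'r::ab_group_add \<Rightarrow> 'r) \<Rightarrow> ('k \<Rightarrow> 's::ab_group_add \<Rightarrow> 's)
    \<Rightarrow> ('r \<Rightarrow> 'r \<Rightarrow> 'r) \<Rightarrow> ('s \<Rightarrow> 's \<Rightarrow> 's) \<Rightarrow> ('r \<Rightarrow> 's)
    \<Rightarrow> ('r \<Rightarrow> 'r \<Rightarrow> 'r) \<times> ('s \<Rightarrow> 's \<Rightarrow> 's) \<times> ('r \<Rightarrow> 's) \<Rightarrow> bool" where
  "zinb_2coboundary scR scS mR mS f c \<longleftrightarrow>
     (\<exists>\<xi> \<pi>. Vector_Spaces.linear scR scR \<xi> \<and> Vector_Spaces.linear scS scS \<pi> \<and>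
            c = zinb_d1f mR mS f (\<xi>, \<pi>))"

text \<open>The identities in *[[t]] for the K[[t]]-bilinear
  extensions are expressed coefficientwise (coefficient of t^n) on elements of R, S.\<close>

definition zinb_deformation ::
  "('k::field \<Rightarrow> 'r::ab_group_add \<Rightarrow> 'r) \<Rightarrow> ('k \<Rightarrow> 's::ab_group_add \<Rightarrow> 's)
   \<Rightarrow> ('r \<Rightarrow> 'r \<Rightarrow> 'r) \<Rightarrow> ('s \<Rightarrow> 's \<Rightarrow> 's) \<Rightarrow> ('r \<Rightarrow> 's)
   \<Rightarrow> (nat \<Rightarrow> 'r \<Rightarrow> 'r \<Rightarrow> 'r) \<Rightarrow> (nat \<Rightarrow> 's \<Rightarrow> 's \<Rightarrow> 's) \<Rightarrow> (nat \<Rightarrow> 'r \<Rightarrow> 's) \<Rightarrow> bool" where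
  "zinb_deformation scR scS mR mS f mRs mSs fs \<longleftrightarrow>
     mRs 0 = mR \<and> mSs 0 = mS \<and> fs 0 = f \<and>
     (\<forall>i. zinb_C2f scR scS (mRs i, mSs i, fs i)) \<and>
     (\<forall>n x y z. (\<Sum>i\<le>n. mRs i (mRs (n - i) x y) z)
        = (\<Sum>i\<le>n. mRs i x (mRs (n - i) y z) + mRs i x (mRs (n - i) z y))) \<and>
     (\<forall>n x y z. (\<Sum>i\<le>n. mSs i (mSs (n - i) x y) z)
        = (\<Sum>i\<le>n. mSs i x (mSs (n - i) y z) + mSs i x (mSs (n - i) z y))) \<and>
     (\<forall>n x y. (\<Sum>i\<le>n. fs i (mRs (n - i) x y))
        = (\<Sum>i\<le>n. \<Sum>j\<le>n - i. mSs i (fs j x) (fs (n - i - j) y)))"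

definition formal_inverse :: "(nat \<Rightarrow> 'a \<Rightarrow> 'a::ab_group_add) \<Rightarrow> (nat \<Rightarrow> 'a \<Rightarrow> 'a) \<Rightarrow> bool" where
  "formal_inverse \<phi> \<psi> \<longleftrightarrow>
     (\<forall>n x. (\<Sum>i\<le>n. \<phi> i (\<psi> (n - i) x)) = (if n = 0 then x else 0)) \<and>
     (\<forall>n x. (\<Sum>i\<le>n. \<psi> i (\<phi> (n - i) x)) = (if n = 0 then x else 0))"

definition zinb_equivalent ::
  "('k::field \<Rightarrow> 'r::ab_group_add \<Rightarrow> 'r) \<Rightarrow> ('k \<Rightarrow> 's::ab_group_add \<Rightarrow> 's)
   \<Rightarrow> (nat \<Rightarrow> 'r \<Rightarrow> 'r \<Rightarrow> 'r) \<Rightarrow> (nat \<Rightarrow> 's \<Rightarrow> 's \<Rightarrow> 's) \<Rightarrow> (nat \<Rightarrow> 'r \<Rightarrow> 's)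
   \<Rightarrow> (nat \<Rightarrow> 'r \<Rightarrow> 'r \<Rightarrow> 'r) \<Rightarrow> (nat \<Rightarrow> 's \<Rightarrow> 's \<Rightarrow> 's) \<Rightarrow> (nat \<Rightarrow> 'r \<Rightarrow> 's) \<Rightarrow> bool" where
  "zinb_equivalent scR scS mRs mSs fs mRs' mSs' fs' \<longleftrightarrow>
     (\<exists>\<phi>R \<phi>S \<psi>R \<psi>S.
        \<phi>R 0 = id \<and> \<phi>S 0 = id \<and>
        (\<forall>i. Vector_Spaces.linear scR scR (\<phi>R i) \<and> Vector_Spaces.linear scS scS (\<phi>S i)) \<and>
        formal_inverse \<phi>R \<psi>R \<and> formal_inverse \<phi>S \<psi>S \<and>
        (\<forall>n x y. mRs' n x y = (\<Sum>i\<le>n. \<Sum>j\<le>n - i. \<Sum>k\<le>n - i - j.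
            \<phi>R i (mRs j (\<psi>R k x) (\<psi>R (n - i - j - k) y)))) \<and>
        (\<forall>n x y. mSs' n x y = (\<Sum>i\<le>n. \<Sum>j\<le>n - i. \<Sum>k\<le>n - i - j.
            \<phi>S i (mSs j (\<psi>S k x) (\<psi>S (n - i - j - k) y)))) \<and>
        (\<forall>n x. fs' n x = (\<Sum>i\<le>n. \<Sum>j\<le>n - i. \<phi>S i (fs j (\<psi>R (n - i - j) x)))))"

end

theory Submission
  imports Defs
begin

text \<open>If \<open>\<theta>_1, ..., \<theta>_l\<close> vanish, the coefficient of \<open>t^(l+1)\<close> in the Zinbiel identities
  for \<open>M_{R,t}\<close>, \<open>M_{S,t}\<close> and in the morphism identity for \<open>F_t\<close> involves only \<open>\<theta>_0\<close> and
  \<open>\<theta>_{l+1}\<close>, and it says precisely \<open>d^2_f \<theta>_{l+1} = 0\<close>. For equivalent deformations,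
  \<open>\<Phi>_t = Id + \<phi>_1 t + ...\<close> has inverse \<open>Id - \<phi>_1 t + ...\<close>, so the first-order coefficients
  of the conjugated structures give \<open>\<theta>_1 - \<theta>'_1 = d^1_f (\<phi>_{R,1}; \<phi>_{S,1})\<close>.\<close>

lemma sum_atMost_first_last:
  fixes g :: "nat \<Rightarrow> 'a::comm_monoid_add"
  assumes "\<And>i. 0 < i \<Longrightarrow> i < n \<Longrightarrow> g i = 0" and "0 < n"
  shows "sum g {..n} = g 0 + g n"
proof -
  have "sum g {..n} = sum g {0, n}"
    by (rule sum.mono_neutral_right) (use assms in \<open>auto simp: le_less\<close>)
  then show ?thesis using assms(2) by simp
qed

lemma k_bilinearD:
  assumes "k_bilinear s1 s2 m"
  shows k_bilinear_add_right: "m x (a + b) = m x a + m x b"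
    and k_bilinear_minus_right: "m x (- a) = - m x a"
    and k_bilinear_minus_left: "m (- a) y = - m a y"
    and k_bilinear_zero_left: "m 0 y = 0"
proof -
  have "module_hom s1 s2 (m x)" and "module_hom s1 s2 (\<lambda>x. m x y)"
    using assms by (auto simp: k_bilinear_def linear_iff_module_hom)
  then show "m x (a + b) = m x a + m x b" "m x (- a) = - m x a"
    "m (- a) y = - m a y" "m 0 y = 0"
    using module_hom.add module_hom.neg module_hom.zero by fastforce+
qed

lemma zinbiel_coeff_d2_eq_0:
  fixes ms :: "nat \<Rightarrow> 'a \<Rightarrow> 'a \<Rightarrow> 'a::ab_group_add"
  assumes zinb: "(\<Sum>i\<le>n. ms i (ms (n - i) x y) z)
      = (\<Sum>i\<le>n. ms i x (ms (n - i) y z) + ms i x (ms (n - i) z y))"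
    and vanish: "\<And>i. 0 < i \<Longrightarrow> i < n \<Longrightarrow> ms i = (\<lambda>_ _. 0)"
    and "0 < n"
    and add_right: "\<And>k a b. ms k x (a + b) = ms k x a + ms k x b"
  shows "zinb_d2 (ms 0) (ms 0) (ms 0) (ms n) x y z = 0"
proof -
  have "(\<Sum>i\<le>n. ms i (ms (n - i) x y) z) = ms 0 (ms n x y) z + ms n (ms 0 x y) z"
    by (subst sum_atMost_first_last) (simp_all add: vanish \<open>0 < n\<close>)
  moreover have "(\<Sum>i\<le>n. ms i x (ms (n - i) y z) + ms i x (ms (n - i) z y))
      = (ms 0 x (ms n y z) + ms 0 x (ms n z y)) + (ms n x (ms 0 y z) + ms n x (ms 0 z y))"
    by (subst sum_atMost_first_last) (simp_all add: vanish \<open>0 < n\<close>)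
  ultimately show ?thesis
    using zinb by (simp add: zinb_d2_def add_right algebra_simps)
qed

lemma morphism_coeff_d1_eq:
  fixes mRs :: "nat \<Rightarrow> 'r \<Rightarrow> 'r \<Rightarrow> 'r" and mSs :: "nat \<Rightarrow> 's \<Rightarrow> 's \<Rightarrow> 's::ab_group_add"
    and fs :: "nat \<Rightarrow> 'r \<Rightarrow> 's"
  assumes morph: "(\<Sum>i\<le>n. fs i (mRs (n - i) x y))
      = (\<Sum>i\<le>n. \<Sum>j\<le>n - i. mSs i (fs j x) (fs (n - i - j) y))"
    and vanish: "\<And>i. 0 < i \<Longrightarrow> i < n \<Longrightarrow> mSs i = (\<lambda>_ _. 0) \<and> fs i = (\<lambda>_. 0)"
    and "0 < n"
    and zero_left: "\<And>b. mSs 0 0 b = 0"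
  shows "fs 0 (mRs n x y) - mSs n (fs 0 x) (fs 0 y)
      = zinb_d1 (\<lambda>r s. mSs 0 (fs 0 r) s) (\<lambda>s r. mSs 0 s (fs 0 r)) (mRs 0) (fs n) x y"
proof -
  have "(\<Sum>i\<le>n. fs i (mRs (n - i) x y)) = fs 0 (mRs n x y) + fs n (mRs 0 x y)"
    by (subst sum_atMost_first_last) (simp_all add: vanish \<open>0 < n\<close>)
  moreover have "(\<Sum>j\<le>n. mSs 0 (fs j x) (fs (n - j) y))
      = mSs 0 (fs 0 x) (fs n y) + mSs 0 (fs n x) (fs 0 y)"
    by (subst sum_atMost_first_last) (simp_all add: vanish zero_left \<open>0 < n\<close>)
  then have "(\<Sum>i\<le>n. \<Sum>j\<le>n - i. mSs i (fs j x) (fs (n - i - j) y))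
      = mSs 0 (fs 0 x) (fs n y) + mSs 0 (fs n x) (fs 0 y) + mSs n (fs 0 x) (fs 0 y)"
    by (subst sum_atMost_first_last) (simp_all add: vanish \<open>0 < n\<close>)
  ultimately show ?thesis
    using morph by (simp add: zinb_d1_def algebra_simps)
qed

lemma zinb_deformation_coeff_2cocycle:
  assumes def: "zinb_deformation scR scS mR mS f mRs mSs fs"
    and "0 < n"
    and vanish: "\<And>i. 0 < i \<Longrightarrow> i < n \<Longrightarrow> mRs i = (\<lambda>_ _. 0) \<and> mSs i = (\<lambda>_ _. 0) \<and> fs i = (\<lambda>_. 0)"
  shows "zinb_2cocycle scR scS mR mS f (mRs n, mSs n, fs n)"
proof -
  have C2: "\<And>i. zinb_C2f scR scS (mRs i, mSs i, fs i)"
    and coeff0: "mRs 0 = mR" "mSs 0 = mS" "fs 0 = f"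
    using def by (simp_all add: zinb_deformation_def)
  have bilinR: "\<And>k. k_bilinear scR scR (mRs k)" and bilinS: "\<And>k. k_bilinear scS scS (mSs k)"
    using C2 by (simp_all add: zinb_C2f_def)
  have "zinb_d2 mR mR mR (mRs n) x y z = 0" for x y z
    using zinbiel_coeff_d2_eq_0[where ms = mRs and n = n and x = x and y = y and z = z]
      def vanish \<open>0 < n\<close> k_bilinear_add_right[OF bilinR]
    by (simp add: zinb_deformation_def coeff0)
  moreover have "zinb_d2 mS mS mS (mSs n) x y z = 0" for x y z
    using zinbiel_coeff_d2_eq_0[where ms = mSs and n = n and x = x and y = y and z = z]
      def vanish \<open>0 < n\<close> k_bilinear_add_right[OF bilinS]
    by (simp add: zinb_deformation_def coeff0)
  moreover have "f (mRs n x y) - mSs n (f x) (f y)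
      = zinb_d1 (\<lambda>r s. mS (f r) s) (\<lambda>s r. mS s (f r)) mR (fs n) x y" for x y
    using morphism_coeff_d1_eq[where mRs = mRs and mSs = mSs and fs = fs and n = n and x = x
        and y = y] def vanish \<open>0 < n\<close> k_bilinear_zero_left[OF bilinS[of 0]]
    by (simp add: zinb_deformation_def coeff0)
  ultimately show ?thesis
    using C2[of n] by (simp add: zinb_2cocycle_def zinb_d2f_def fun_eq_iff)
qed

lemma formal_inverse_coeff_0:
  assumes "formal_inverse \<phi> \<psi>" and "\<phi> 0 = id"
  shows "\<psi> 0 = id"
  using assms by (auto simp: formal_inverse_def fun_eq_iff dest: spec[of _ 0])

lemma formal_inverse_coeff_1:
  assumes "formal_inverse \<phi> \<psi>" and "\<phi> 0 = id"
  shows "\<psi> 1 x = - \<phi> 1 x"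
proof -
  have "(\<Sum>i\<le>1. \<phi> i (\<psi> (1 - i) x)) = 0"
    using assms(1) by (simp add: formal_inverse_def)
  then have "\<psi> 1 x + \<phi> 1 x = 0"
    using formal_inverse_coeff_0[OF assms] assms(2) by simp
  then show ?thesis
    by (simp add: eq_neg_iff_add_eq_0)
qed

lemma conjugate_product_coeff_1:
  fixes ms :: "nat \<Rightarrow> 'a \<Rightarrow> 'a \<Rightarrow> 'a::ab_group_add"
  assumes "formal_inverse \<phi> \<psi>" and "\<phi> 0 = id"
    and minus_right: "\<And>a. ms 0 x (- a) = - ms 0 x a"
    and minus_left: "\<And>a. ms 0 (- a) y = - ms 0 a y"
  shows "(\<Sum>i\<le>1. \<Sum>j\<le>1 - i. \<Sum>k\<le>1 - i - j. \<phi> i (ms j (\<psi> k x) (\<psi> (1 - i - j - k) y)))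
    = ms 1 x y - zinb_d1 (ms 0) (ms 0) (ms 0) (\<phi> 1) x y"
  using formal_inverse_coeff_0[OF assms(1,2)] formal_inverse_coeff_1[OF assms(1,2)]
  by (simp add: assms(2) zinb_d1_def minus_right minus_left algebra_simps)

lemma conjugate_morphism_coeff_1:
  fixes fs :: "nat \<Rightarrow> 'r::ab_group_add \<Rightarrow> 's::ab_group_add"
  assumes "formal_inverse \<phi>R \<psi>R" and "\<phi>R 0 = id" and "\<phi>S 0 = id"
    and minus: "\<And>a. fs 0 (- a) = - fs 0 a"
  shows "(\<Sum>i\<le>1. \<Sum>j\<le>1 - i. \<phi>S i (fs j (\<psi>R (1 - i - j) x)))
    = fs 1 x - (fs 0 (\<phi>R 1 x) - \<phi>S 1 (fs 0 x))"
  using formal_inverse_coeff_0[OF assms(1,2)] formal_inverse_coeff_1[OF assms(1,2)]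
  by (simp add: assms(3) minus algebra_simps)

lemma zinb_equivalent_coeff_1_coboundary:
  assumes def: "zinb_deformation scR scS mR mS f mRs mSs fs"
    and equiv: "zinb_equivalent scR scS mRs mSs fs mRs' mSs' fs'"
  shows "zinb_2coboundary scR scS mR mS f
    (\<lambda>x y. mRs 1 x y - mRs' 1 x y, \<lambda>x y. mSs 1 x y - mSs' 1 x y, \<lambda>x. fs 1 x - fs' 1 x)"
proof -
  obtain \<phi>R \<phi>S \<psi>R \<psi>S where
    id0: "\<phi>R 0 = id" "\<phi>S 0 = id" and
    lin: "\<And>i. Vector_Spaces.linear scR scR (\<phi>R i) \<and> Vector_Spaces.linear scS scS (\<phi>S i)" and
    invR: "formal_inverse \<phi>R \<psi>R" and invS: "formal_inverse \<phi>S \<psi>S" and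
    conjR: "\<And>n x y. mRs' n x y = (\<Sum>i\<le>n. \<Sum>j\<le>n - i. \<Sum>k\<le>n - i - j.
        \<phi>R i (mRs j (\<psi>R k x) (\<psi>R (n - i - j - k) y)))" and
    conjS: "\<And>n x y. mSs' n x y = (\<Sum>i\<le>n. \<Sum>j\<le>n - i. \<Sum>k\<le>n - i - j.
        \<phi>S i (mSs j (\<psi>S k x) (\<psi>S (n - i - j - k) y)))" and
    conjF: "\<And>n x. fs' n x = (\<Sum>i\<le>n. \<Sum>j\<le>n - i. \<phi>S i (fs j (\<psi>R (n - i - j) x)))"
    using equiv unfolding zinb_equivalent_def by blast
  have C2: "zinb_C2f scR scS (mR, mS, f)" and coeff0: "mRs 0 = mR" "mSs 0 = mS" "fs 0 = f"
    using def unfolding zinb_deformation_def by metis+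
  then have bilinR: "k_bilinear scR scR mR" and bilinS: "k_bilinear scS scS mS"
    and hom_f: "module_hom scR scS f"
    by (simp_all add: zinb_C2f_def linear_iff_module_hom)
  from hom_f have minus_f: "f (- a) = - f a" for a
    by (rule module_hom.neg)
  have "mRs 1 x y - mRs' 1 x y = zinb_d1 mR mR mR (\<phi>R 1) x y" for x y
    using conjugate_product_coeff_1[where ms = mRs and x = x and y = y, OF invR id0(1)]
      conjR[of 1 x y]
      k_bilinear_minus_right[OF bilinR] k_bilinear_minus_left[OF bilinR]
    by (simp add: coeff0)
  moreover have "mSs 1 x y - mSs' 1 x y = zinb_d1 mS mS mS (\<phi>S 1) x y" for x y
    using conjugate_product_coeff_1[where ms = mSs and x = x and y = y, OF invS id0(2)]
      conjS[of 1 x y]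
      k_bilinear_minus_right[OF bilinS] k_bilinear_minus_left[OF bilinS]
    by (simp add: coeff0)
  moreover have "fs 1 x - fs' 1 x = f (\<phi>R 1 x) - \<phi>S 1 (f x)" for x
    using conjugate_morphism_coeff_1[where \<phi>S = \<phi>S and fs = fs and x = x, OF invR id0]
      conjF[of 1 x] minus_f
    by (simp add: coeff0)
  ultimately show ?thesis
    unfolding zinb_2coboundary_def zinb_d1f_def using lin
    by (intro exI[of _ "\<phi>R 1"] exI[of _ "\<phi>S 1"]) (simp add: fun_eq_iff)
qed

text \<open>Likewise only the equivalence, not the deformation property, of the
  second series is used.\<close>

theorem theorem3p1:
  fixes scR :: "'k::field \<Rightarrow> 'r::ab_group_add \<Rightarrow> 'r"
    and scS :: "'k \<Rightarrow> 's::ab_group_add \<Rightarrow> 's"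
    and mR :: "'r \<Rightarrow> 'r \<Rightarrow> 'r" and mS :: "'s \<Rightarrow> 's \<Rightarrow> 's" and f :: "'r \<Rightarrow> 's"
    and mRs :: "nat \<Rightarrow> 'r \<Rightarrow> 'r \<Rightarrow> 'r" and mSs :: "nat \<Rightarrow> 's \<Rightarrow> 's \<Rightarrow> 's"
    and fs :: "nat \<Rightarrow> 'r \<Rightarrow> 's"
  assumes hf: "zinbiel_morphism scR scS mR mS f"
    and hdef: "zinb_deformation scR scS mR mS f mRs mSs fs"
  shows "zinb_2cocycle scR scS mR mS f (mRs 1, mSs 1, fs 1)
    \<and> (\<forall>l::nat. (\<forall>i\<in>{1..l}. (mRs i, mSs i, fs i) = ((\<lambda>_ _. 0), (\<lambda>_ _. 0), (\<lambda>_. 0)))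
          \<longrightarrow> zinb_2cocycle scR scS mR mS f (mRs (l + 1), mSs (l + 1), fs (l + 1)))
    \<and> (\<forall>mRs' mSs' fs'. zinb_deformation scR scS mR mS f mRs' mSs' fs'
          \<and> zinb_equivalent scR scS mRs mSs fs mRs' mSs' fs'
          \<longrightarrow> zinb_2coboundary scR scS mR mS f
                (\<lambda>x y. mRs 1 x y - mRs' 1 x y, \<lambda>x y. mSs 1 x y - mSs' 1 x y,
                 \<lambda>x. fs 1 x - fs' 1 x))"
proof -
  have cocycle: "zinb_2cocycle scR scS mR mS f (mRs (l + 1), mSs (l + 1), fs (l + 1))"
    if "\<forall>i\<in>{1..l}. (mRs i, mSs i, fs i) = ((\<lambda>_ _. 0), (\<lambda>_ _. 0), (\<lambda>_. 0))" for l
    using zinb_deformation_coeff_2cocycle[OF hdef, of "l + 1"] that by simp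
  show ?thesis
    using cocycle[of 0] cocycle zinb_equivalent_coeff_1_coboundary[OF hdef] by auto
qed

end
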